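(* Let $(v^*,u^* )$ be the unique saddle point of $\min_v\max_u E(v,u)$ and let $L(v,u)=\frac{\alpha}{2}\sum_{s}|v_s-v^*_s|^2+\tau\sum_{s,a}\big(u^*_{sa}\log\frac{u^*_{sa}}{u_{sa}}+u_{sa}-u^*_{sa}\big)$. Consider the natural gradient ascent descent dynamics on $\mathbb{R}^{|S|}\times\mathbb{R}^{|S|\times|A|}_{>0}$: $$\frac{dv_{s'}}{dt}=-\Big(v_{s'}-\frac1\alpha\sum_{s,a}K_{ass'}u_{sa}\Big),\ s'\in S,\qquad \frac{du_{sa}}{dt}=-u_{sa}\Big(\log\frac{u_{sa}}{\tilde u_s}-\frac1\tau\Big(r_{sa}-\sum_{s'}K_{ass'}v_{s'}\Big)\Big),\ (s,a)\in S\times A.$$ Then $L$ is a Lyapunov function for this dynamics: $\frac{dL}{dt}\le 0$ along its trajectories, and the only trajectory of the dynamics along which $\frac{dL}{dt}=0$ is the constant trajectory $(v,u)=(v^*,u^* )$.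
   Context: Finite MDP: state space $S$, action space $A$, transition probabilities $P_{ass'}$ (with $\sum_{s'}P_{ass'}=1$), rewards $r_{sa}\ge0$, discount $\gamma\in(0,1)$, regularization $\tau>0$, and $\alpha>0$. $K_{ass'}=\delta_{ss'}-\gamma P_{ass'}$, $\tilde u_s=\sum_a u_{sa}$, and $E(v,u)=\frac{\alpha}{2}\sum_s v_s^2+\sum_{s,a}u_{sa}(r_{sa}-\sum_{s'}K_{ass'}v_{s'})-\tau\sum_{s,a}u_{sa}\log(u_{sa}/\tilde u_s)$. This min-max problem has a unique saddle point $(v^*,u^* )$ with $u^*_{sa}>0$. *)

theory Defs
  imports "HOL-Analysis.Analysis"
begin

text \<open>Finite MDP: states of type 's, actions of type 'a (both finite).
  Transition probabilities P a s s', rewards r s a, value v s, (unnormalised)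
  policy/occupation variable u s a.\<close>

definition Kmat :: "real \<Rightarrow> ('a \<Rightarrow> 's \<Rightarrow> 's \<Rightarrow> real) \<Rightarrow> 'a \<Rightarrow> 's \<Rightarrow> 's \<Rightarrow> real" where
  "Kmat \<gamma> P a s s' = (if s = s' then 1 else 0) - \<gamma> * P a s s'"

definition utilde :: "('s \<Rightarrow> 'a::finite \<Rightarrow> real) \<Rightarrow> 's \<Rightarrow> real" where
  "utilde u s = (\<Sum>a\<in>UNIV. u s a)"

definition Efun :: "real \<Rightarrow> real \<Rightarrow> real \<Rightarrow> ('a::finite \<Rightarrow> 's::finite \<Rightarrow> 's \<Rightarrow> real)
    \<Rightarrow> ('s \<Rightarrow> 'a \<Rightarrow> real) \<Rightarrow> ('s \<Rightarrow> real) \<Rightarrow> ('s \<Rightarrow> 'a \<Rightarrow> real) \<Rightarrow> real" where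
  "Efun \<alpha> \<tau> \<gamma> P r v u =
     \<alpha> / 2 * (\<Sum>s\<in>UNIV. (v s)\<^sup>2)
     + (\<Sum>s\<in>UNIV. \<Sum>a\<in>UNIV. u s a * (r s a - (\<Sum>s'\<in>UNIV. Kmat \<gamma> P a s s' * v s')))
     - \<tau> * (\<Sum>s\<in>UNIV. \<Sum>a\<in>UNIV. u s a * ln (u s a / utilde u s))"

definition is_saddle :: "real \<Rightarrow> real \<Rightarrow> real \<Rightarrow> ('a::finite \<Rightarrow> 's::finite \<Rightarrow> 's \<Rightarrow> real)
    \<Rightarrow> ('s \<Rightarrow> 'a \<Rightarrow> real) \<Rightarrow> ('s \<Rightarrow> real) \<Rightarrow> ('s \<Rightarrow> 'a \<Rightarrow> real) \<Rightarrow> bool" where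
  "is_saddle \<alpha> \<tau> \<gamma> P r vs us \<longleftrightarrow>
     (\<forall>s a. 0 < us s a) \<and>
     (\<forall>u. (\<forall>s a. 0 < u s a) \<longrightarrow> Efun \<alpha> \<tau> \<gamma> P r vs u \<le> Efun \<alpha> \<tau> \<gamma> P r vs us) \<and>
     (\<forall>v. Efun \<alpha> \<tau> \<gamma> P r vs us \<le> Efun \<alpha> \<tau> \<gamma> P r v us)"

definition Lyap :: "real \<Rightarrow> real \<Rightarrow> ('s::finite \<Rightarrow> real) \<Rightarrow> ('s \<Rightarrow> 'a::finite \<Rightarrow> real)
    \<Rightarrow> ('s \<Rightarrow> real) \<Rightarrow> ('s \<Rightarrow> 'a \<Rightarrow> real) \<Rightarrow> real" where
  "Lyap \<alpha> \<tau> vs us v u =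
     \<alpha> / 2 * (\<Sum>s\<in>UNIV. \<bar>v s - vs s\<bar>\<^sup>2)
     + \<tau> * (\<Sum>s\<in>UNIV. \<Sum>a\<in>UNIV. us s a * ln (us s a / u s a) + u s a - us s a)"

end

theory Submission
  imports Defs
begin

text \<open>
  At the saddle point the first-order conditions \<alpha> v* = K^T u* and \<tau> log \<pi>* = r - K v* hold,
  where \<pi> = u / utilde u is the policy of u. Substituted into the derivative of L along the flow,
  they make the cross terms (v - v*) K^T (u - u*) and (u - u*) K (v - v*) cancel, leaving
  dL/dt = - \<alpha> |v - v*|^2 - \<tau> \<Sum>_s \<Sum>_a (u - u*) (log \<pi> - log \<pi>*).
  For each state the inner sum equals utilde u KL(\<pi> || \<pi>*) + utilde u* KL(\<pi>* || \<pi>) >= 0,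
  with equality iff \<pi> = \<pi>*. If dL/dt vanishes identically, then v = v* and \<pi> = \<pi>*; as v is then
  constant, K^T u = \<alpha> v* = K^T u*, and with equal policies the state masses
  d = utilde u - utilde u* satisfy d = \<gamma> M^T d for a stochastic matrix M, whence d = 0 as \<gamma> < 1.
\<close>

lemma sum_transpose:
  fixes K :: "'a::finite \<Rightarrow> 's::finite \<Rightarrow> 's \<Rightarrow> real"
  shows "(\<Sum>s'\<in>UNIV. x s' * (\<Sum>s\<in>UNIV. \<Sum>a\<in>UNIV. K a s s' * y s a))
       = (\<Sum>s\<in>UNIV. \<Sum>a\<in>UNIV. y s a * (\<Sum>s'\<in>UNIV. K a s s' * x s'))"
proof -
  have "(\<Sum>s'\<in>UNIV. x s' * (\<Sum>s\<in>UNIV. \<Sum>a\<in>UNIV. K a s s' * y s a))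
      = (\<Sum>s'\<in>UNIV. \<Sum>s\<in>UNIV. \<Sum>a\<in>UNIV. K a s s' * x s' * y s a)"
    by (simp add: sum_distrib_left mult_ac)
  also have "\<dots> = (\<Sum>s\<in>UNIV. \<Sum>a\<in>UNIV. \<Sum>s'\<in>UNIV. K a s s' * x s' * y s a)"
    by (subst sum.swap) (intro sum.cong refl sum.swap)
  also have "\<dots> = (\<Sum>s\<in>UNIV. \<Sum>a\<in>UNIV. y s a * (\<Sum>s'\<in>UNIV. K a s s' * x s'))"
    by (simp add: sum_distrib_left mult_ac)
  finally show ?thesis .
qed

lemma relative_entropy_term_nonneg:
  fixes x y :: real
  assumes "0 < x" "0 < y"
  shows "0 \<le> x * ln (x / y) - x + y"
proof -
  have "x * ln (y / x) \<le> x * (y / x - 1)"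
    using assms by (intro mult_left_mono ln_le_minus_one) auto
  then show ?thesis
    using assms by (simp add: ln_div algebra_simps)
qed

lemma relative_entropy_term_eq_0_iff:
  fixes x y :: real
  assumes "0 < x" "0 < y"
  shows "x * ln (x / y) - x + y = 0 \<longleftrightarrow> x = y"
proof
  assume "x * ln (x / y) - x + y = 0"
  then have "ln (y / x) = y / x - 1"
    using assms by (simp add: ln_div field_simps)
  then have "y / x = 1"
    using assms by (intro ln_eq_minus_one) auto
  then show "x = y"
    using assms by simp
qed simp

definition policy :: "('s \<Rightarrow> 'a::finite \<Rightarrow> real) \<Rightarrow> 's \<Rightarrow> 'a \<Rightarrow> real" where
  "policy u s a = u s a / utilde u s"

lemma utilde_pos: "(\<And>s a. 0 < u s a) \<Longrightarrow> 0 < utilde u s"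
  unfolding utilde_def by (simp add: sum_pos)

lemma policy_pos: "(\<And>s a. 0 < u s a) \<Longrightarrow> 0 < policy u s a"
  unfolding policy_def by (simp add: utilde_pos)

lemma sum_policy: "(\<And>s a. 0 < u s a) \<Longrightarrow> (\<Sum>a\<in>UNIV. policy u s a) = 1"
  using utilde_pos[of u s] unfolding policy_def by (simp add: sum_divide_distrib[symmetric] utilde_def)

lemma utilde_mult_policy: "(\<And>s a. 0 < u s a) \<Longrightarrow> utilde u s * policy u s a = u s a"
  using utilde_pos[of u s] unfolding policy_def by simp

lemma sum_log_policy_diff_eq_relative_entropies:
  fixes u w :: "'s \<Rightarrow> 'a::finite \<Rightarrow> real" and s :: 's
  assumes u_pos: "\<And>s a. 0 < u s a" and w_pos: "\<And>s a. 0 < w s a"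
  defines "p \<equiv> policy u s" and "q \<equiv> policy w s"
  shows "(\<Sum>a\<in>UNIV. (u s a - w s a) * (ln (p a) - ln (q a)))
    = utilde u s * (\<Sum>a\<in>UNIV. p a * ln (p a / q a) - p a + q a)
      + utilde w s * (\<Sum>a\<in>UNIV. q a * ln (q a / p a) - q a + p a)"
proof -
  have pos: "p a > 0" "q a > 0" for a
    using policy_pos[of u, OF u_pos] policy_pos[of w, OF w_pos] by (auto simp: p_def q_def)
  have ln_ratio: "ln (p a / q a) = ln (p a) - ln (q a)" "ln (q a / p a) = ln (q a) - ln (p a)" for a
    using pos[of a] by (simp_all add: ln_div)
  have u_eq: "u s a = utilde u s * p a" "w s a = utilde w s * q a" for a
    using utilde_mult_policy[of u s a, OF u_pos] utilde_mult_policy[of w s a, OF w_pos] by (simp_all add: p_def q_def)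
  have "(u s a - w s a) * (ln (p a) - ln (q a))
      = utilde u s * (p a * ln (p a / q a) - p a + q a) + utilde w s * (q a * ln (q a / p a) - q a + p a)
        + (utilde u s - utilde w s) * (p a - q a)" for a
    unfolding ln_ratio u_eq by (simp add: algebra_simps)
  moreover have "(\<Sum>a\<in>UNIV. (utilde u s - utilde w s) * (p a - q a)) = 0"
    using sum_policy[of u s, OF u_pos] sum_policy[of w s, OF w_pos]
    by (simp add: p_def q_def sum_distrib_left[symmetric] sum_subtractf)
  ultimately show ?thesis
    unfolding sum_distrib_left by (simp only: sum.distrib add_0_right)
qed

lemma sum_log_policy_diff_nonneg:
  fixes u w :: "'s \<Rightarrow> 'a::finite \<Rightarrow> real" and s :: 's
  assumes u_pos: "\<And>s a. 0 < u s a" and w_pos: "\<And>s a. 0 < w s a"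
  shows "0 \<le> (\<Sum>a\<in>UNIV. (u s a - w s a) * (ln (policy u s a) - ln (policy w s a)))"
proof -
  have "0 < policy u s a" "0 < policy w s a" "0 < utilde u s" "0 < utilde w s" for a
    using u_pos w_pos by (auto intro: policy_pos utilde_pos)
  then show ?thesis
    unfolding sum_log_policy_diff_eq_relative_entropies[of u w, OF u_pos w_pos]
    by (intro add_nonneg_nonneg mult_nonneg_nonneg sum_nonneg relative_entropy_term_nonneg less_imp_le)
qed

lemma sum_log_policy_diff_eq_0_iff:
  fixes u w :: "'s \<Rightarrow> 'a::finite \<Rightarrow> real" and s :: 's
  assumes u_pos: "\<And>s a. 0 < u s a" and w_pos: "\<And>s a. 0 < w s a"
  shows "(\<Sum>a\<in>UNIV. (u s a - w s a) * (ln (policy u s a) - ln (policy w s a))) = 0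
    \<longleftrightarrow> policy u s = policy w s"
proof -
  have "0 < policy u s a" "0 < policy w s a" "0 < utilde u s" "0 < utilde w s" for a
    using u_pos w_pos by (auto intro: policy_pos utilde_pos)
  then show ?thesis
    unfolding sum_log_policy_diff_eq_relative_entropies[of u w, OF u_pos w_pos]
    by (auto simp: add_nonneg_eq_0_iff sum_nonneg_eq_0_iff sum_nonneg relative_entropy_term_nonneg
        relative_entropy_term_eq_0_iff fun_eq_iff)
qed

lemma Efun_v_has_directional_derivative:
  fixes P :: "'a::finite \<Rightarrow> 's::finite \<Rightarrow> 's \<Rightarrow> real"
  shows "((\<lambda>h. Efun \<alpha> \<tau> \<gamma> P r (\<lambda>s. v s + h * e s) u) has_real_derivative
      (\<Sum>s'\<in>UNIV. e s' * (\<alpha> * v s' - (\<Sum>s\<in>UNIV. \<Sum>a\<in>UNIV. Kmat \<gamma> P a s s' * u s a)))) (at 0)"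
proof -
  have "(\<Sum>s'\<in>UNIV. e s' * (\<alpha> * v s' - (\<Sum>s\<in>UNIV. \<Sum>a\<in>UNIV. Kmat \<gamma> P a s s' * u s a)))
      = \<alpha> * (\<Sum>s'\<in>UNIV. e s' * v s')
        - (\<Sum>s\<in>UNIV. \<Sum>a\<in>UNIV. u s a * (\<Sum>s'\<in>UNIV. Kmat \<gamma> P a s s' * e s'))"
    unfolding sum_transpose[symmetric] by (simp add: right_diff_distrib sum_subtractf sum_distrib_left mult_ac)
  moreover have "((\<lambda>h. Efun \<alpha> \<tau> \<gamma> P r (\<lambda>s. v s + h * e s) u) has_real_derivative
      \<alpha> * (\<Sum>s'\<in>UNIV. e s' * v s')
      - (\<Sum>s\<in>UNIV. \<Sum>a\<in>UNIV. u s a * (\<Sum>s'\<in>UNIV. Kmat \<gamma> P a s s' * e s'))) (at 0)"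
    unfolding Efun_def
    by (rule derivative_eq_intros refl)+ (simp add: sum_negf sum_distrib_left mult_ac)
  ultimately show ?thesis
    by simp
qed

lemma Efun_u_has_directional_derivative:
  fixes P :: "'a::finite \<Rightarrow> 's::finite \<Rightarrow> 's \<Rightarrow> real"
  assumes u_pos: "\<And>s a. 0 < u s a"
  shows "((\<lambda>h. Efun \<alpha> \<tau> \<gamma> P r v (\<lambda>s a. u s a + h * w s a)) has_real_derivative
      (\<Sum>s\<in>UNIV. \<Sum>a\<in>UNIV. w s a * (r s a - (\<Sum>s'\<in>UNIV. Kmat \<gamma> P a s s' * v s')
         - \<tau> * ln (u s a / utilde u s)))) (at 0)"
proof -
  have U_pos: "0 < sum (u s) UNIV" for s
    using u_pos by (simp add: sum_pos)
  \<comment> \<open>Perturbing u also moves the normaliser utilde u; the two resulting terms cancel.\<close>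
  have mass_balance: "(\<Sum>a\<in>UNIV. (w s a * sum (u s) UNIV - u s a * sum (w s) UNIV) / sum (u s) UNIV) = 0" for s
    using U_pos[of s] by (simp add: sum_divide_distrib[symmetric] sum_subtractf sum_distrib_right[symmetric] mult.commute)
  show ?thesis
    unfolding Efun_def utilde_def
    apply (rule derivative_eq_intros refl | simp add: u_pos U_pos less_imp_neq[OF U_pos, symmetric])+
    apply (simp add: less_imp_neq[OF u_pos, symmetric] sum.distrib mass_balance right_diff_distrib
        sum_subtractf sum_distrib_right mult_ac)
    apply (simp add: sum_distrib_left)
    done
qed

lemma saddle_v_stationary:
  fixes P :: "'a::finite \<Rightarrow> 's::finite \<Rightarrow> 's \<Rightarrow> real"
  assumes "is_saddle \<alpha> \<tau> \<gamma> P r vs us"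
  shows "\<alpha> * vs s' = (\<Sum>s\<in>UNIV. \<Sum>a\<in>UNIV. Kmat \<gamma> P a s s' * us s a)"
proof -
  define g where "g s' = \<alpha> * vs s' - (\<Sum>s\<in>UNIV. \<Sum>a\<in>UNIV. Kmat \<gamma> P a s s' * us s a)" for s'
  have min: "Efun \<alpha> \<tau> \<gamma> P r vs us \<le> Efun \<alpha> \<tau> \<gamma> P r (\<lambda>s. vs s + h * g s) us" for h
    using assms by (simp add: is_saddle_def)
  \<comment> \<open>Differentiate along the gradient g itself.\<close>
  have "(\<Sum>s'\<in>UNIV. g s' * g s') = 0"
    using Efun_v_has_directional_derivative[of \<alpha> \<tau> \<gamma> P r vs g us, folded g_def] zero_less_one
    by (rule DERIV_local_min) (use min in simp)
  then have "g s' = 0"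
    by (simp add: sum_nonneg_eq_0_iff)
  then show ?thesis
    by (simp add: g_def)
qed

lemma saddle_u_stationary:
  fixes P :: "'a::finite \<Rightarrow> 's::finite \<Rightarrow> 's \<Rightarrow> real"
  assumes saddle: "is_saddle \<alpha> \<tau> \<gamma> P r vs us"
  shows "\<tau> * ln (policy us s a) = r s a - (\<Sum>s'\<in>UNIV. Kmat \<gamma> P a s s' * vs s')"
proof -
  define g where "g s a = r s a - (\<Sum>s'\<in>UNIV. Kmat \<gamma> P a s s' * vs s') - \<tau> * ln (us s a / utilde us s)"
    for s a
  have us_pos: "0 < us s a" for s a
    using saddle by (simp add: is_saddle_def)
  have "\<forall>\<^sub>F h in nhds 0. \<forall>s a. 0 < us s a + h * g s a"
  proof (intro eventually_all_finite)
    fix s a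
    have "((\<lambda>h. us s a + h * g s a) \<longlongrightarrow> us s a + 0 * g s a) (nhds 0)"
      by (intro tendsto_intros filterlim_ident)
    then show "\<forall>\<^sub>F h in nhds 0. 0 < us s a + h * g s a"
      using us_pos by (intro order_tendstoD(1)) auto
  qed
  then obtain d where "0 < d" and d: "\<And>h. \<bar>h\<bar> < d \<Longrightarrow> \<forall>s a. 0 < us s a + h * g s a"
    by (auto simp: eventually_nhds_metric dist_real_def)
  have max: "\<forall>h. \<bar>0 - h\<bar> < d \<longrightarrow>
      Efun \<alpha> \<tau> \<gamma> P r vs (\<lambda>s a. us s a + h * g s a) \<le> Efun \<alpha> \<tau> \<gamma> P r vs (\<lambda>s a. us s a + 0 * g s a)"
    using saddle d by (simp add: is_saddle_def)
  have "(\<Sum>s\<in>UNIV. \<Sum>a\<in>UNIV. g s a * g s a) = 0"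
    using Efun_u_has_directional_derivative[of us \<alpha> \<tau> \<gamma> P r vs g, OF us_pos, folded g_def] \<open>0 < d\<close> max
    by (rule DERIV_local_max)
  then have "g s a = 0"
    by (simp add: sum_nonneg_eq_0_iff sum_nonneg)
  then show ?thesis
    by (simp add: g_def policy_def)
qed

lemma Lyap_has_derivative:
  fixes vt :: "real \<Rightarrow> 's::finite \<Rightarrow> real" and ut :: "real \<Rightarrow> 's \<Rightarrow> 'a::finite \<Rightarrow> real"
  assumes v_deriv: "\<And>s. ((\<lambda>t. vt t s) has_real_derivative v' s) (at t)"
    and u_deriv: "\<And>s a. ((\<lambda>t. ut t s a) has_real_derivative u' s a) (at t)"
    and u_pos: "\<And>s a. 0 < ut t s a" and us_pos: "\<And>s a. 0 < us s a"
  shows "((\<lambda>t. Lyap \<alpha> \<tau> vs us (vt t) (ut t)) has_real_derivative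
      \<alpha> * (\<Sum>s\<in>UNIV. (vt t s - vs s) * v' s)
      + \<tau> * (\<Sum>s\<in>UNIV. \<Sum>a\<in>UNIV. (1 - us s a / ut t s a) * u' s a)) (at t)"
proof -
  have v_term: "((\<lambda>t. (vt t s - vs s)\<^sup>2) has_real_derivative 2 * ((vt t s - vs s) * v' s)) (at t)" for s
    by (rule derivative_eq_intros v_deriv refl)+ simp
  have u_term: "((\<lambda>t. us s a * ln (us s a / ut t s a) + ut t s a - us s a) has_real_derivative
      (1 - us s a / ut t s a) * u' s a) (at t)" for s a
    by (rule derivative_eq_intros u_deriv refl
        | simp add: u_pos us_pos less_imp_neq[OF u_pos, symmetric] less_imp_neq[OF us_pos, symmetric] field_simps)+
  have "\<alpha> / 2 * (\<Sum>s\<in>UNIV. 2 * ((vt t s - vs s) * v' s)) = \<alpha> * (\<Sum>s\<in>UNIV. (vt t s - vs s) * v' s)"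
    by (simp add: sum_distrib_left[symmetric])
  moreover have "((\<lambda>t. Lyap \<alpha> \<tau> vs us (vt t) (ut t)) has_real_derivative
      \<alpha> / 2 * (\<Sum>s\<in>UNIV. 2 * ((vt t s - vs s) * v' s))
      + \<tau> * (\<Sum>s\<in>UNIV. \<Sum>a\<in>UNIV. (1 - us s a / ut t s a) * u' s a)) (at t)"
    unfolding Lyap_def power2_abs by (intro DERIV_add DERIV_cmult DERIV_sum v_term u_term)
  ultimately show ?thesis
    by (simp only:)
qed

definition dissipation :: "real \<Rightarrow> real \<Rightarrow> ('s::finite \<Rightarrow> real) \<Rightarrow> ('s \<Rightarrow> 'a::finite \<Rightarrow> real)
    \<Rightarrow> ('s \<Rightarrow> real) \<Rightarrow> ('s \<Rightarrow> 'a \<Rightarrow> real) \<Rightarrow> real" where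
  "dissipation \<alpha> \<tau> vs us v u =
     \<alpha> * (\<Sum>s\<in>UNIV. (v s - vs s)\<^sup>2)
     + \<tau> * (\<Sum>s\<in>UNIV. \<Sum>a\<in>UNIV. (u s a - us s a) * (ln (policy u s a) - ln (policy us s a)))"

lemma dissipation_nonneg:
  assumes "0 \<le> \<alpha>" "0 \<le> \<tau>" "\<And>s a. 0 < u s a" "\<And>s a. 0 < us s a"
  shows "0 \<le> dissipation \<alpha> \<tau> vs us v u"
  unfolding dissipation_def
  using assms by (intro add_nonneg_nonneg mult_nonneg_nonneg sum_nonneg sum_log_policy_diff_nonneg) auto

lemma dissipation_eq_0_iff:
  assumes "0 < \<alpha>" "0 < \<tau>" and u_pos: "\<And>s a. 0 < u s a" and us_pos: "\<And>s a. 0 < us s a"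
  shows "dissipation \<alpha> \<tau> vs us v u = 0 \<longleftrightarrow> v = vs \<and> policy u = policy us"
proof -
  have "0 \<le> (\<Sum>s\<in>UNIV. (v s - vs s)\<^sup>2)"
    by (simp add: sum_nonneg)
  moreover have log_policy_diff_nonneg: "0 \<le> (\<Sum>a\<in>UNIV. (u s a - us s a) * (ln (policy u s a) - ln (policy us s a)))" for s
    using sum_log_policy_diff_nonneg[of u us, OF u_pos us_pos] .
  then have "0 \<le> (\<Sum>s\<in>UNIV. \<Sum>a\<in>UNIV. (u s a - us s a) * (ln (policy u s a) - ln (policy us s a)))"
    by (simp add: sum_nonneg)
  ultimately show ?thesis
    using assms log_policy_diff_nonneg sum_log_policy_diff_eq_0_iff[of u us, OF u_pos us_pos]
    by (simp add: dissipation_def add_nonneg_eq_0_iff sum_nonneg_eq_0_iff fun_eq_iff)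
qed

lemma dissipation_identity:
  fixes K :: "'a::finite \<Rightarrow> 's::finite \<Rightarrow> 's \<Rightarrow> real" and u us :: "'s \<Rightarrow> 'a \<Rightarrow> real"
  assumes "0 < \<alpha>" "0 < \<tau>" and u_pos: "\<And>s a. 0 < u s a"
    and vs_stationary: "\<And>s'. \<alpha> * vs s' = (\<Sum>s\<in>UNIV. \<Sum>a\<in>UNIV. K a s s' * us s a)"
    and us_stationary: "\<And>s a. \<tau> * ln (policy us s a) = r s a - (\<Sum>s'\<in>UNIV. K a s s' * vs s')"
  shows "\<alpha> * (\<Sum>s'\<in>UNIV. (v s' - vs s') * (- (v s' - 1 / \<alpha> * (\<Sum>s\<in>UNIV. \<Sum>a\<in>UNIV. K a s s' * u s a))))
     + \<tau> * (\<Sum>s\<in>UNIV. \<Sum>a\<in>UNIV. (1 - us s a / u s a) * (- u s a * (ln (u s a / utilde u s)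
             - 1 / \<tau> * (r s a - (\<Sum>s'\<in>UNIV. K a s s' * v s')))))
   = - dissipation \<alpha> \<tau> vs us v u"
proof -
  define cross_v where "cross_v s' = (v s' - vs s') * (\<Sum>s\<in>UNIV. \<Sum>a\<in>UNIV. K a s s' * (u s a - us s a))" for s'
  define cross_u where "cross_u s a = (u s a - us s a) * (\<Sum>s'\<in>UNIV. K a s s' * (v s' - vs s'))" for s a
  have v_term: "\<alpha> * ((v s' - vs s') * (- (v s' - 1 / \<alpha> * (\<Sum>s\<in>UNIV. \<Sum>a\<in>UNIV. K a s s' * u s a))))
      = - \<alpha> * (v s' - vs s')\<^sup>2 + cross_v s'" for s'
  proof -
    have flow_diff: "(\<Sum>s\<in>UNIV. \<Sum>a\<in>UNIV. K a s s' * (u s a - us s a))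
        = (\<Sum>s\<in>UNIV. \<Sum>a\<in>UNIV. K a s s' * u s a) - \<alpha> * vs s'"
      unfolding vs_stationary by (simp add: right_diff_distrib sum_subtractf)
    show ?thesis
      unfolding cross_v_def flow_diff using assms(1) by (simp add: field_simps power2_eq_square)
  qed
  have u_term: "\<tau> * ((1 - us s a / u s a) * (- u s a * (ln (u s a / utilde u s)
             - 1 / \<tau> * (r s a - (\<Sum>s'\<in>UNIV. K a s s' * v s')))))
      = - \<tau> * ((u s a - us s a) * (ln (policy u s a) - ln (policy us s a))) - cross_u s a" for s a
  proof -
    have r_eq: "r s a = \<tau> * ln (policy us s a) + (\<Sum>s'\<in>UNIV. K a s s' * vs s')"
      using us_stationary[of s a] by simp
    have reward_diff: "(\<Sum>s'\<in>UNIV. K a s s' * (v s' - vs s'))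
        = (\<Sum>s'\<in>UNIV. K a s s' * v s') - (\<Sum>s'\<in>UNIV. K a s s' * vs s')"
      by (simp add: right_diff_distrib sum_subtractf)
    show ?thesis
      unfolding cross_u_def reward_diff r_eq policy_def[symmetric]
      using assms(2) u_pos[of s a] by (simp add: field_simps)
  qed
  have cross: "(\<Sum>s'\<in>UNIV. cross_v s') = (\<Sum>s\<in>UNIV. \<Sum>a\<in>UNIV. cross_u s a)"
    unfolding cross_v_def cross_u_def by (rule sum_transpose)
  show ?thesis
    unfolding sum_distrib_left[of \<alpha>] sum_distrib_left[of \<tau>] v_term u_term
    using cross by (simp add: dissipation_def sum.distrib sum_subtractf sum_negf sum_distrib_left)
qed

lemma Lyap_has_derivative_along_flow:
  fixes P :: "'a::finite \<Rightarrow> 's::finite \<Rightarrow> 's \<Rightarrow> real"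
    and vt :: "real \<Rightarrow> 's \<Rightarrow> real" and ut :: "real \<Rightarrow> 's \<Rightarrow> 'a \<Rightarrow> real"
  assumes "0 < \<alpha>" "0 < \<tau>" and saddle: "is_saddle \<alpha> \<tau> \<gamma> P r vs us"
    and u_pos: "\<And>s a. 0 < ut t s a"
    and v_ode: "\<And>s'. ((\<lambda>t. vt t s') has_real_derivative
          (- (vt t s' - 1 / \<alpha> * (\<Sum>s\<in>UNIV. \<Sum>a\<in>UNIV. Kmat \<gamma> P a s s' * ut t s a)))) (at t)"
    and u_ode: "\<And>s a. ((\<lambda>t. ut t s a) has_real_derivative
          (- ut t s a * (ln (ut t s a / utilde (ut t) s)
             - 1 / \<tau> * (r s a - (\<Sum>s'\<in>UNIV. Kmat \<gamma> P a s s' * vt t s'))))) (at t)"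
  shows "((\<lambda>t. Lyap \<alpha> \<tau> vs us (vt t) (ut t)) has_real_derivative
      - dissipation \<alpha> \<tau> vs us (vt t) (ut t)) (at t)"
proof -
  have "\<And>s a. 0 < us s a"
    using saddle by (simp add: is_saddle_def)
  from Lyap_has_derivative[where vt=vt and ut=ut and vs=vs and us=us and \<alpha>=\<alpha> and \<tau>=\<tau>,
      OF v_ode u_ode u_pos this]
  show ?thesis
    unfolding dissipation_identity[of \<alpha> \<tau> "ut t", OF assms(1,2) u_pos
        saddle_v_stationary[OF saddle] saddle_u_stationary[OF saddle]] .
qed

lemma discounted_stochastic_fixpoint_eq_0:
  fixes d :: "'s::finite \<Rightarrow> real" and M :: "'s \<Rightarrow> 's \<Rightarrow> real"
  assumes M_nonneg: "\<And>s s'. 0 \<le> M s s'" and M_sum: "\<And>s. (\<Sum>s'\<in>UNIV. M s s') = 1"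
    and "0 \<le> \<gamma>" "\<gamma> < 1"
    and fixpoint: "\<And>s'. d s' = \<gamma> * (\<Sum>s\<in>UNIV. d s * M s s')"
  shows "d = (\<lambda>_. 0)"
proof -
  have "(\<Sum>s'\<in>UNIV. \<bar>d s'\<bar>) \<le> (\<Sum>s'\<in>UNIV. \<gamma> * (\<Sum>s\<in>UNIV. \<bar>d s\<bar> * M s s'))"
  proof (intro sum_mono)
    fix s'
    have "\<bar>d s'\<bar> = \<gamma> * \<bar>\<Sum>s\<in>UNIV. d s * M s s'\<bar>"
      using \<open>0 \<le> \<gamma>\<close> by (subst fixpoint) (simp add: abs_mult)
    also have "\<dots> \<le> \<gamma> * (\<Sum>s\<in>UNIV. \<bar>d s\<bar> * M s s')"
      using \<open>0 \<le> \<gamma>\<close> M_nonneg by (intro mult_left_mono order_trans[OF sum_abs]) (auto simp: abs_mult)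
    finally show "\<bar>d s'\<bar> \<le> \<gamma> * (\<Sum>s\<in>UNIV. \<bar>d s\<bar> * M s s')" .
  qed
  also have "\<dots> = \<gamma> * (\<Sum>s'\<in>UNIV. \<Sum>s\<in>UNIV. \<bar>d s\<bar> * M s s')"
    by (simp add: sum_distrib_left)
  also have "\<dots> = \<gamma> * (\<Sum>s\<in>UNIV. \<bar>d s\<bar> * (\<Sum>s'\<in>UNIV. M s s'))"
    by (subst sum.swap) (simp add: sum_distrib_left)
  also have "\<dots> = \<gamma> * (\<Sum>s\<in>UNIV. \<bar>d s\<bar>)"
    using M_sum by simp
  finally have "(1 - \<gamma>) * (\<Sum>s\<in>UNIV. \<bar>d s\<bar>) \<le> 0"
    by (simp add: algebra_simps)
  then have "(\<Sum>s\<in>UNIV. \<bar>d s\<bar>) = 0"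
    using \<open>\<gamma> < 1\<close> by (simp add: mult_le_0_iff antisym sum_nonneg)
  then show ?thesis
    by (simp add: sum_nonneg_eq_0_iff fun_eq_iff)
qed

lemma eq_if_policy_eq_and_flow_eq:
  fixes P :: "'a::finite \<Rightarrow> 's::finite \<Rightarrow> 's \<Rightarrow> real" and u us :: "'s \<Rightarrow> 'a \<Rightarrow> real"
  assumes P_nonneg: "\<And>a s s'. 0 \<le> P a s s'" and P_sum: "\<And>a s. (\<Sum>s'\<in>UNIV. P a s s') = 1"
    and \<gamma>: "0 \<le> \<gamma>" "\<gamma> < 1"
    and u_pos: "\<And>s a. 0 < u s a" and us_pos: "\<And>s a. 0 < us s a"
    and same_policy: "policy u = policy us"
    and same_flow: "\<And>s'. (\<Sum>s\<in>UNIV. \<Sum>a\<in>UNIV. Kmat \<gamma> P a s s' * u s a)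
                         = (\<Sum>s\<in>UNIV. \<Sum>a\<in>UNIV. Kmat \<gamma> P a s s' * us s a)"
  shows "u = us"
proof -
  define \<pi> where "\<pi> = policy us"
  define d where "d s = utilde u s - utilde us s" for s
  define M where "M s s' = (\<Sum>a\<in>UNIV. \<pi> s a * P a s s')" for s s'
  have diff: "u s a - us s a = d s * \<pi> s a" for s a
    using utilde_mult_policy[of u s a, OF u_pos] utilde_mult_policy[of us s a, OF us_pos] same_policy
    by (simp add: d_def \<pi>_def left_diff_distrib)
  have \<pi>_sum: "(\<Sum>a\<in>UNIV. \<pi> s a) = 1" for s
    unfolding \<pi>_def using us_pos by (rule sum_policy)
  have M_nonneg: "0 \<le> M s s'" for s s'
    unfolding M_def \<pi>_def using P_nonneg policy_pos[of us, OF us_pos, THEN less_imp_le]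
    by (intro sum_nonneg mult_nonneg_nonneg)
  have M_sum: "(\<Sum>s'\<in>UNIV. M s s') = 1" for s
  proof -
    have "(\<Sum>s'\<in>UNIV. M s s') = (\<Sum>a\<in>UNIV. \<pi> s a * (\<Sum>s'\<in>UNIV. P a s s'))"
      unfolding M_def by (subst sum.swap) (simp add: sum_distrib_left)
    then show ?thesis
      by (simp add: P_sum \<pi>_sum)
  qed
  have "d s' = \<gamma> * (\<Sum>s\<in>UNIV. d s * M s s')" for s'
  proof -
    have diagonal: "(\<Sum>a\<in>UNIV. (if s = s' then 1 else 0) * (d s * \<pi> s a)) = (if s = s' then d s else 0)" for s
      by (simp add: sum_distrib_left[symmetric] \<pi>_sum)
    have "0 = (\<Sum>s\<in>UNIV. \<Sum>a\<in>UNIV. Kmat \<gamma> P a s s' * (u s a - us s a))"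
      using same_flow[of s'] by (simp add: right_diff_distrib sum_subtractf)
    also have "\<dots> = (\<Sum>s\<in>UNIV. \<Sum>a\<in>UNIV. (if s = s' then 1 else 0) * (d s * \<pi> s a))
        - \<gamma> * (\<Sum>s\<in>UNIV. d s * M s s')"
      unfolding diff Kmat_def M_def left_diff_distrib sum_subtractf
      by (simp add: sum_distrib_left mult_ac)
    also have "\<dots> = d s' - \<gamma> * (\<Sum>s\<in>UNIV. d s * M s s')"
      unfolding diagonal by simp
    finally show ?thesis
      by simp
  qed
  then have "d = (\<lambda>_. 0)"
    using \<gamma> by (intro discounted_stochastic_fixpoint_eq_0[OF M_nonneg M_sum])
  then have "u s a - us s a = 0" for s a
    by (simp add: diff)
  then show ?thesis
    by (simp add: fun_eq_iff)
qed

theorem lemma2p3: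
  fixes P :: "'a::finite \<Rightarrow> 's::finite \<Rightarrow> 's \<Rightarrow> real"
    and r :: "'s \<Rightarrow> 'a \<Rightarrow> real"
    and \<gamma> \<tau> \<alpha> :: real
    and vs :: "'s \<Rightarrow> real" and us :: "'s \<Rightarrow> 'a \<Rightarrow> real"
    and J :: "real set"
    and vt :: "real \<Rightarrow> 's \<Rightarrow> real" and ut :: "real \<Rightarrow> 's \<Rightarrow> 'a \<Rightarrow> real"
  assumes P_nonneg: "\<And>a s s'. 0 \<le> P a s s'"
    and P_sum: "\<And>a s. (\<Sum>s'\<in>UNIV. P a s s') = 1"
    and r_nonneg: "\<And>s a. 0 \<le> r s a"
    and gamma: "0 < \<gamma>" "\<gamma> < 1"
    and tau: "0 < \<tau>"
    and alpha: "0 < \<alpha>"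
    and saddle: "is_saddle \<alpha> \<tau> \<gamma> P r vs us"
    and J: "open J" "is_interval J" "J \<noteq> {}"
    and u_pos: "\<And>t s a. t \<in> J \<Longrightarrow> 0 < ut t s a"
    and v_ode: "\<And>t s'. t \<in> J \<Longrightarrow>
        ((\<lambda>t. vt t s') has_real_derivative
          (- (vt t s' - 1 / \<alpha> * (\<Sum>s\<in>UNIV. \<Sum>a\<in>UNIV. Kmat \<gamma> P a s s' * ut t s a)))) (at t)"
    and u_ode: "\<And>t s a. t \<in> J \<Longrightarrow>
        ((\<lambda>t. ut t s a) has_real_derivative
          (- ut t s a * (ln (ut t s a / utilde (ut t) s)
             - 1 / \<tau> * (r s a - (\<Sum>s'\<in>UNIV. Kmat \<gamma> P a s s' * vt t s'))))) (at t)"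
  shows "(\<forall>t\<in>J. \<exists>D. ((\<lambda>t. Lyap \<alpha> \<tau> vs us (vt t) (ut t)) has_real_derivative D) (at t) \<and> D \<le> 0)
       \<and> ((\<forall>t\<in>J. ((\<lambda>t. Lyap \<alpha> \<tau> vs us (vt t) (ut t)) has_real_derivative 0) (at t))
            \<longrightarrow> (\<forall>t\<in>J. vt t = vs \<and> ut t = us))"
proof -
  have us_pos: "\<And>s a. 0 < us s a"
    using saddle by (simp add: is_saddle_def)
  have Lyap_deriv: "((\<lambda>t. Lyap \<alpha> \<tau> vs us (vt t) (ut t)) has_real_derivative
      - dissipation \<alpha> \<tau> vs us (vt t) (ut t)) (at t)" if "t \<in> J" for t
    by (intro Lyap_has_derivative_along_flow[OF alpha tau saddle] u_pos v_ode u_ode that)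
  show ?thesis
  proof (intro conjI ballI impI)
    fix t assume t: "t \<in> J"
    have "0 \<le> dissipation \<alpha> \<tau> vs us (vt t) (ut t)"
      using alpha tau u_pos[OF t] us_pos by (intro dissipation_nonneg) auto
    then show "\<exists>D. ((\<lambda>t. Lyap \<alpha> \<tau> vs us (vt t) (ut t)) has_real_derivative D) (at t) \<and> D \<le> 0"
      using Lyap_deriv[OF t] by force
  next
    fix t assume Lyap_const: "\<forall>t\<in>J. ((\<lambda>t. Lyap \<alpha> \<tau> vs us (vt t) (ut t)) has_real_derivative 0) (at t)"
      and t: "t \<in> J"
    have equilibrium: "vt t' = vs \<and> policy (ut t') = policy us" if "t' \<in> J" for t'
      using DERIV_unique[OF Lyap_deriv[OF that] Lyap_const[rule_format, OF that]]
        dissipation_eq_0_iff[where u="ut t'" and v="vt t'", OF alpha tau u_pos[OF that] us_pos] by simp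
    have "((\<lambda>t. vt t s') has_real_derivative 0) (at t)" for s'
      by (rule has_field_derivative_transform_within_open[OF DERIV_const J(1) t]) (simp add: equilibrium)
    from DERIV_unique[OF v_ode[OF t] this]
    have flow: "(\<Sum>s\<in>UNIV. \<Sum>a\<in>UNIV. Kmat \<gamma> P a s s' * ut t s a) = \<alpha> * vs s'" for s'
      using alpha equilibrium[OF t] by (simp add: field_simps)
    show "vt t = vs"
      using equilibrium[OF t] by simp
    show "ut t = us"
      using gamma(1) equilibrium[OF t]
      by (intro eq_if_policy_eq_and_flow_eq[where P=P and \<gamma>=\<gamma>, OF P_nonneg P_sum _ gamma(2) u_pos[OF t] us_pos])
        (simp_all add: flow saddle_v_stationary[OF saddle])
  qed
qed

end
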